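(* Let $\rho$ be $\mathfrak L$-regular, fix $G>0$, and suppose $g\in[0,G]$, $t=g/(K\log K)$. There exists $C=C(G)>0$ (also depending on $\mathfrak L$) such that for all $E_1,E_2\in\mathbb R$, all integers $K\ge2$ and $0\le k\le K-1$, and all $x\in\mathbb R$, $$\int_{x-2}^{x+2}\big(p^{(k)}_{E_1}*p^{(K-k-1)}_{E_2}\big)(y)\,dy\le\frac{C}{1+|x|^{4/3}},$$ and for all $E\in\mathbb R$, $K\ge2$ and $x\in\mathbb R$, $$\rho_E(x)\le\frac{C}{1+|x+E|^{4/3}}.$$
   Context: A probability density $p:\mathbb R\to[0,\infty)$ is $\mathfrak L$-regular ($\mathfrak L>0$) if: (i) $p(x)\le\mathfrak L(1+x^2)^{-1}$ for all $x$; (ii) $p(x)\ge\mathfrak L^{-1}$ for all $x\in[-\mathfrak L^{-1},\mathfrak L^{-1}]$; (iii) $p'$ exists everywhere and $|p'(x)|\le\mathfrak L(1+|x|)^{-1-1/\mathfrak L}$ for all $x$; (iv) for every $v>0$, $\inf_{|x|<v}p(x)>0$; (v) $p'(x)=0$ for only finitely many $x$. $V_0$ denotes a random variable with density $\rho$. Self-energy densities: for $E\in\mathbb R$, $p_E$ is the density of a fixed (arbitrarily chosen) real-valued solution $\Gamma$ of the distributional equation $\Gamma\overset{d}{=}\big(V_0-E-t^2\sum_{i=1}^K\Gamma_i\big)^{-1}$, where $\Gamma_1,\dots,\Gamma_K$ are i.i.d. copies of $\Gamma$ independent of $V_0$. For $M\ge1$, $p^{(M)}_E$ is the density of $t^2\sum_{i=1}^M\Gamma_i$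 with $\Gamma_i$ i.i.d. of density $p_E$; $p^{(0)}_E$ is the point mass at $0$ (so convolution with it is the identity). $\rho_E$ denotes the density of $V_0-E-t^2\sum_{i=1}^{K-1}\Gamma_i$, where $\Gamma_i$ are i.i.d. with density $p_E$ and independent of $V_0$. *)

theory Defs
  imports "HOL-Probability.Probability"
begin

definition prob_density :: "(real \<Rightarrow> real) \<Rightarrow> bool" where
  "prob_density p \<longleftrightarrow> p \<in> borel_measurable borel \<and> (\<forall>x. 0 \<le> p x) \<and>
     (\<integral>\<^sup>+ x. ennreal (p x) \<partial>lborel) = 1"

definition dens :: "(real \<Rightarrow> real) \<Rightarrow> real measure" where
  "dens p = density lborel (\<lambda>x. ennreal (p x))"

definition regular :: "real \<Rightarrow> (real \<Rightarrow> real) \<Rightarrow> bool" where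
  "regular L p \<longleftrightarrow> L > 0 \<and> prob_density p \<and>
     (\<forall>x. p x \<le> L / (1 + x\<^sup>2)) \<and>
     (\<forall>x. -(1/L) \<le> x \<and> x \<le> 1/L \<longrightarrow> p x \<ge> 1/L) \<and>
     (\<forall>x. p differentiable (at x)) \<and>
     (\<forall>x. \<bar>deriv p x\<bar> \<le> L * (1 + \<bar>x\<bar>) powr (-1 - 1/L)) \<and>
     (\<forall>v>0. (INF x\<in>{x. \<bar>x\<bar> < v}. p x) > 0) \<and>
     finite {x. deriv p x = 0}"

text \<open>mu is (the law of) a solution of
  Gamma =d (V0 - E - t^2 sum_{i<K} Gamma_i)^{-1}, V0 with density rho,
  Gamma_1..Gamma_K iid copies of Gamma independent of V0.\<close>
definition sed_fixpoint :: "nat \<Rightarrow> real \<Rightarrow> (real \<Rightarrow> real) \<Rightarrow> real \<Rightarrow> real measure \<Rightarrow> bool" where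
  "sed_fixpoint K t rho E mu \<longleftrightarrow>
     distr (dens rho \<Otimes>\<^sub>M (\<Pi>\<^sub>M i\<in>{..<K}. mu)) borel
        (\<lambda>(v, \<gamma>). 1 / (v - E - t\<^sup>2 * (\<Sum>i<K. \<gamma> i))) = mu"

text \<open>Law p^(M): distribution of t^2 sum_{i<M} Gamma_i, Gamma_i iid with law mu
  (for M = 0 this is the point mass at 0).\<close>
definition sed_sum :: "nat \<Rightarrow> real \<Rightarrow> real measure \<Rightarrow> real measure" where
  "sed_sum M t mu = distr (\<Pi>\<^sub>M i\<in>{..<M}. mu) borel (\<lambda>\<gamma>. t\<^sup>2 * (\<Sum>i<M. \<gamma> i))"

text \<open>rho_E: the (continuous version of the) density of V0 - E - t^2 sum_{i<K-1} Gamma_i,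
  i.e. rho_E(x) = E[rho(x + E + t^2 sum Gamma_i)].\<close>
definition rhoE :: "nat \<Rightarrow> real \<Rightarrow> (real \<Rightarrow> real) \<Rightarrow> real \<Rightarrow> real measure \<Rightarrow> real \<Rightarrow> real" where
  "rhoE K t rho E mu x = (\<integral> s. rho (x + E + s) \<partial>(sed_sum (K - 1) t mu))"

end

theory Submission
  imports Defs
begin

(* Each self-energy Gamma has a density bounded by L / w^2: given the other variables,
   Gamma = 1 / (V_0 - c) and V_0 has density at most L. Let S = c (Gamma_1 + ... + Gamma_N)
   with independent such Gamma_j and N^2 c <= B, and let |x| = r^3 >= 64 and h <= r^2.
   If S lies in [x - h, x + h], then either the c Gamma_j cut off at level a = r^2 already
   sum to |x|/4 in absolute value, which by Chebyshev (the cut-off second moment is at most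
   2 L a c) has probability O(r^-4); or some |c Gamma_i| exceeds a, with probability at most
   2 L c / a, while the other terms, independent of Gamma_i, still sum to |x|/4, which has
   probability O(r^-2); or the other terms sum to less than |x|/4, and then c Gamma_i has to
   hit an interval of length 2h at distance about |x| from 0, which the bound L / w^2 makes
   O(L h c / x^2). Summed over the N choices of i, every case is O(r^-4) = O(|x|^(-4/3)).
   The convolutions of the p^(k) are laws of such sums, and rho_E is the average of
   rho(x + E + S) with rho(y) <= L / (1 + y^2), so both bounds follow. *)

section \<open>Laws with density at most \<open>L / w\<^sup>2\<close>\<close>

lemma nn_integral_inverse_square_atLeast:
  fixes c :: real assumes "c > 0"
  shows "(\<integral>\<^sup>+ z. ennreal (1/z^2) * indicator {c..} z \<partial>lborel) = ennreal (1/c)"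
proof -
  have "(\<integral>\<^sup>+ z. ennreal (1/z^2) * indicator {c..} z \<partial>lborel) = ennreal (0 - (- 1/c))"
  proof (rule nn_integral_FTC_atLeast)
    fix x :: real assume "c \<le> x"
    then have "x \<noteq> 0" using assms by auto
    then show "((\<lambda>z. - 1/z) has_real_derivative 1/x^2) (at x)"
      by (auto intro!: derivative_eq_intros simp: power2_eq_square)
  next
    show "((\<lambda>z::real. - 1/z) \<longlongrightarrow> 0) at_top"
      using tendsto_minus[OF tendsto_inverse_0_at_top[OF filterlim_ident]]
      by (simp add: inverse_eq_divide)
  qed auto
  then show ?thesis by simp
qed

lemma nn_integral_inverse_square_abs_ge:
  fixes c :: real assumes "c > 0"
  shows "(\<integral>\<^sup>+ z. ennreal (1/z^2) * indicator {z. c \<le> \<bar>z\<bar>} z \<partial>lborel) = ennreal (2/c)"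
proof -
  have reflected: "(\<integral>\<^sup>+ z. ennreal (1/z^2) * indicator {c..} (-z) \<partial>lborel) = ennreal (1/c)"
    using nn_integral_real_affine[of "\<lambda>z. ennreal (1/z^2) * indicator {c..} z" "-1" 0]
      nn_integral_inverse_square_atLeast[OF assms] by simp
  have "(\<integral>\<^sup>+ z. ennreal (1/z^2) * indicator {z. c \<le> \<bar>z\<bar>} z \<partial>lborel) =
     (\<integral>\<^sup>+ z. ennreal (1/z^2) * indicator {c..} z + ennreal (1/z^2) * indicator {c..} (-z) \<partial>lborel)"
    using assms by (intro nn_integral_cong) (auto simp: indicator_def)
  also have "\<dots> = ennreal (1/c) + ennreal (1/c)"
    by (subst nn_integral_add) (auto simp: nn_integral_inverse_square_atLeast[OF assms] reflected)
  also have "\<dots> = ennreal (2/c)"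
    using assms by (simp flip: ennreal_plus)
  finally show ?thesis .
qed

lemma divide_mem_reciprocal_interval:
  fixes c d h u :: real
  assumes "0 < c" "0 \<le> h" "h < \<bar>d\<bar>" "u \<in> {d-h..d+h}"
  shows "c/u \<in> {c/(d+h) .. c/(d-h)}"
proof (cases "d > 0")
  case True
  then show ?thesis using assms by (auto intro!: divide_left_mono)
next
  case False
  then have "u < 0" "d + h < 0" "d - h < 0" using assms by auto
  then show ?thesis using assms by (simp add: divide_le_eq le_divide_eq)
qed

lemma divide_diff_squares_le:
  fixes d h x k :: real
  assumes d: "3*\<bar>x\<bar>/4 \<le> \<bar>d\<bar>" and h: "0 \<le> h" "4*h \<le> \<bar>x\<bar>" and x: "x \<noteq> 0" and k: "0 \<le> k"
  shows "k/(d^2 - h^2) \<le> 2*k/x^2"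
proof -
  have "(3*\<bar>x\<bar>/4)^2 \<le> \<bar>d\<bar>^2" "h^2 \<le> (\<bar>x\<bar>/4)^2"
    using d h by (intro power_mono; simp)+
  then have gap: "x^2/2 \<le> d^2 - h^2" by (simp add: power2_eq_square field_simps)
  have "0 < x^2/2" using x by simp
  moreover from this gap have "0 < d^2 - h^2" by linarith
  ultimately have "k/(d^2 - h^2) \<le> k/(x^2/2)"
    using k by (intro divide_left_mono[OF gap] mult_pos_pos) auto
  then show ?thesis by (simp add: mult.commute)
qed

(* The law has density at most L / w^2: after the substitution w = 1/z the right-hand side
   is the integral of h(w) L / w^2 dw. *)
definition inv_sq_dominated :: "real \<Rightarrow> real measure \<Rightarrow> bool" where
  "inv_sq_dominated L \<mu> \<longleftrightarrow> prob_space \<mu> \<and> sets \<mu> = sets borel \<and>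
     (\<forall>h \<in> borel_measurable borel. (\<integral>\<^sup>+ w. h w \<partial>\<mu>) \<le> ennreal L * (\<integral>\<^sup>+ z. h (1/z) \<partial>lborel))"

definition cutoff :: "real \<Rightarrow> real \<Rightarrow> real" where
  "cutoff a y = (if a < \<bar>y\<bar> then 0 else y)"

lemma cutoff_measurable [measurable]: "cutoff a \<in> borel_measurable borel"
  unfolding cutoff_def by measurable

context
  fixes L :: real and \<mu> :: "real measure"
  assumes dominated: "inv_sq_dominated L \<mu>"
begin

lemma inv_sq_dominated_prob_space: "prob_space \<mu>"
  and inv_sq_dominated_sets: "sets \<mu> = sets borel"
  and inv_sq_dominated_nn_integral:
    "h \<in> borel_measurable borel \<Longrightarrow> (\<integral>\<^sup>+ w. h w \<partial>\<mu>) \<le> ennreal L * (\<integral>\<^sup>+ z. h (1/z) \<partial>lborel)"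
  using dominated by (auto simp: inv_sq_dominated_def)

lemma inv_sq_dominated_pos: "L > 0"
proof (rule ccontr)
  assume "\<not> L > 0"
  then have "ennreal L = 0" by (simp add: ennreal_eq_0_iff)
  then have "(\<integral>\<^sup>+ w. 1 \<partial>\<mu>) \<le> 0"
    using inv_sq_dominated_nn_integral[of "\<lambda>_. 1"] by simp
  then show False
    using prob_space.emeasure_space_1[OF inv_sq_dominated_prob_space] by simp
qed

lemma emeasure_le_inv_sq:
  assumes B: "B \<in> sets borel"
  shows "emeasure \<mu> B \<le> ennreal L * emeasure lborel {z. 1/z \<in> B}"
proof -
  have "(\<lambda>z::real. 1/z) -` B \<inter> space borel \<in> sets borel"
    using B by (intro measurable_sets[of _ borel]) auto
  then have inv_B: "{z::real. 1/z \<in> B} \<in> sets lborel" by (simp add: vimage_def)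
  have "emeasure \<mu> B = (\<integral>\<^sup>+ w. indicator B w \<partial>\<mu>)"
    using B inv_sq_dominated_sets by simp
  also have "\<dots> \<le> ennreal L * (\<integral>\<^sup>+ z. indicator {z. 1/z \<in> B} z \<partial>lborel)"
    using inv_sq_dominated_nn_integral[of "indicator B"] B by (simp add: indicator_def)
  also have "\<dots> = ennreal L * emeasure lborel {z. 1/z \<in> B}"
    using inv_B by simp
  finally show ?thesis .
qed

lemma measure_abs_scaled_gt:
  assumes c: "0 \<le> c" and a: "0 < a"
  shows "measure \<mu> {w. a < \<bar>c * w\<bar>} \<le> 2*L*c/a"
proof -
  have "{z. 1/z \<in> {w. a < \<bar>c * w\<bar>}} \<subseteq> {-(c/a) .. c/a}"
  proof
    fix z :: real assume "z \<in> {z. 1/z \<in> {w. a < \<bar>c * w\<bar>}}"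
    then have "a * \<bar>z\<bar> < c" using a c by (cases "z = 0") (auto simp: abs_mult field_simps)
    then have "\<bar>z\<bar> \<le> c/a" using a by (simp add: field_simps)
    then show "z \<in> {-(c/a) .. c/a}" by (simp add: abs_le_iff)
  qed
  then have preimage: "emeasure lborel {z. 1/z \<in> {w. a < \<bar>c * w\<bar>}} \<le> ennreal (2*c/a)"
    using emeasure_mono[of _ "{-(c/a) .. c/a}" lborel] c a by simp
  have "emeasure \<mu> {w. a < \<bar>c * w\<bar>} \<le> ennreal L * emeasure lborel {z. 1/z \<in> {w. a < \<bar>c * w\<bar>}}"
    by (rule emeasure_le_inv_sq) measurable
  also have "\<dots> \<le> ennreal L * ennreal (2*c/a)"
    by (rule mult_left_mono[OF preimage]) simp
  also have "\<dots> = ennreal (2*L*c/a)"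
    using inv_sq_dominated_pos by (simp add: ennreal_mult'[symmetric] mult_ac)
  finally show ?thesis
    using inv_sq_dominated_pos c a unfolding measure_def by (intro enn2real_leI) auto
qed

lemma nn_integral_cutoff_sq:
  assumes c: "0 \<le> c" and a: "0 < a"
  shows "(\<integral>\<^sup>+ w. ennreal ((cutoff a (c * w))^2) \<partial>\<mu>) \<le> ennreal (2*L*a*c)"
proof (cases "c = 0")
  case True
  then show ?thesis by (simp add: cutoff_def)
next
  case False
  with c have c: "0 < c" by simp
  have pointwise: "ennreal ((cutoff a (c/z))^2)
      \<le> ennreal (c^2) * (ennreal (1/z^2) * indicator {z. c/a \<le> \<bar>z\<bar>} z)" for z
  proof (cases "\<bar>c/z\<bar> \<le> a \<and> z \<noteq> 0")
    case True
    then have "c \<le> a * \<bar>z\<bar>" by (auto simp: abs_div pos_divide_le_eq mult.commute)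
    then have "c/a \<le> \<bar>z\<bar>" using a by (simp add: pos_divide_le_eq mult.commute)
    then show ?thesis
      using True by (simp add: cutoff_def power_divide ennreal_mult'[symmetric])
  next
    case False
    then show ?thesis by (auto simp: cutoff_def)
  qed
  have "(\<integral>\<^sup>+ z. ennreal ((cutoff a (c/z))^2) \<partial>lborel)
      \<le> ennreal (c^2) * (\<integral>\<^sup>+ z. ennreal (1/z^2) * indicator {z. c/a \<le> \<bar>z\<bar>} z \<partial>lborel)"
    by (subst nn_integral_cmult[symmetric]) (auto intro!: nn_integral_mono pointwise)
  also have "\<dots> = ennreal (c^2) * ennreal (2/(c/a))"
    using a c by (simp add: nn_integral_inverse_square_abs_ge)
  also have "\<dots> = ennreal (2*a*c)"
    using a c by (simp add: ennreal_mult'[symmetric] power2_eq_square)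
  finally have lborel_bound: "(\<integral>\<^sup>+ z. ennreal ((cutoff a (c/z))^2) \<partial>lborel) \<le> ennreal (2*a*c)" .
  have "(\<integral>\<^sup>+ w. ennreal ((cutoff a (c * w))^2) \<partial>\<mu>)
      \<le> ennreal L * (\<integral>\<^sup>+ z. ennreal ((cutoff a (c/z))^2) \<partial>lborel)"
    using inv_sq_dominated_nn_integral[of "\<lambda>w. ennreal ((cutoff a (c * w))^2)"] by simp
  also have "\<dots> \<le> ennreal L * ennreal (2*a*c)"
    by (rule mult_left_mono[OF lborel_bound]) simp
  also have "\<dots> = ennreal (2*L*a*c)"
    using inv_sq_dominated_pos by (simp add: ennreal_mult'[symmetric] mult_ac)
  finally show ?thesis .
qed

lemma measure_scaled_in_interval:
  assumes c: "0 \<le> c" and h: "0 \<le> h" "h < \<bar>d\<bar>"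
  shows "measure \<mu> {w. c * w \<in> {d-h..d+h}} \<le> L * (2*h*c/(d^2 - h^2))"
proof -
  have h_d: "h^2 < d^2" using power_strict_mono[OF h(2) h(1), of 2] by simp
  have preimage: "{z. 1/z \<in> {w. c * w \<in> {d-h..d+h}}} \<subseteq> {c/(d+h) .. c/(d-h)}"
  proof
    fix z assume "z \<in> {z. 1/z \<in> {w. c * w \<in> {d-h..d+h}}}"
    then have "c/z \<in> {d-h..d+h}" by simp
    moreover from this have "c/z \<noteq> 0" using h by auto
    then have "c \<noteq> 0" and "z = c / (c/z)" by auto
    ultimately show "z \<in> {c/(d+h) .. c/(d-h)}"
      using divide_mem_reciprocal_interval[of c h d "c/z"] c h by auto
  qed
  have length: "c/(d-h) - c/(d+h) = 2*h*c/(d^2 - h^2)"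
    using h by (simp add: field_simps power2_eq_square)
  have "emeasure lborel {z. 1/z \<in> {w. c * w \<in> {d-h..d+h}}} \<le> emeasure lborel {c/(d+h) .. c/(d-h)}"
    by (rule emeasure_mono[OF preimage]) simp
  also have "\<dots> = ennreal (2*h*c/(d^2 - h^2))"
  proof -
    have "0 \<le> 2*h*c/(d^2 - h^2)" using h_d c h by simp
    then show ?thesis using length by (subst emeasure_lborel_Icc) auto
  qed
  finally have lborel_bound:
    "emeasure lborel {z. 1/z \<in> {w. c * w \<in> {d-h..d+h}}} \<le> ennreal (2*h*c/(d^2 - h^2))" .
  have "emeasure \<mu> {w. c * w \<in> {d-h..d+h}} \<le> ennreal L * emeasure lborel {z. 1/z \<in> {w. c * w \<in> {d-h..d+h}}}"
    by (rule emeasure_le_inv_sq) measurable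
  also have "\<dots> \<le> ennreal L * ennreal (2*h*c/(d^2 - h^2))"
    by (rule mult_left_mono[OF lborel_bound]) simp
  also have "\<dots> = ennreal (L * (2*h*c/(d^2 - h^2)))"
    using inv_sq_dominated_pos by (simp add: ennreal_mult'[symmetric])
  finally show ?thesis
    using inv_sq_dominated_pos c h h_d unfolding measure_def by (intro enn2real_leI) auto
qed

lemma measure_shifted_scaled_in_interval:
  assumes c: "0 \<le> c" and W: "\<bar>W\<bar> < \<bar>x\<bar>/4" and h: "0 \<le> h" "4*h \<le> \<bar>x\<bar>" and x: "x \<noteq> 0"
  shows "measure \<mu> {y. c * y + W \<in> {x-h..x+h}} \<le> L * (4*h*c/x^2)"
proof -
  define d where "d = x - W"
  have "\<bar>x\<bar> \<le> \<bar>d\<bar> + \<bar>x\<bar>/4" using W by (simp add: d_def)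
  then have d: "3*\<bar>x\<bar>/4 \<le> \<bar>d\<bar>" by simp
  have "{y. c * y + W \<in> {x-h..x+h}} = {w. c * w \<in> {d-h..d+h}}"
    by (auto simp: d_def)
  moreover have "measure \<mu> {w. c * w \<in> {d-h..d+h}} \<le> L * (2*h*c/(d^2 - h^2))"
    using d h x by (intro measure_scaled_in_interval c) auto
  moreover have "L * (2*h*c/(d^2 - h^2)) \<le> L * (4*h*c/x^2)"
    using divide_diff_squares_le[OF d h x, of "2*h*c"] h c inv_sq_dominated_pos
    by (intro mult_left_mono) auto
  ultimately show ?thesis by simp
qed

end

section \<open>Scaled sums of independent such laws\<close>

lemma abs_scaled_sum_le_sum_cutoff:
  assumes "\<forall>j\<in>J. \<bar>c * \<omega> j\<bar> \<le> a"
  shows "\<bar>c * (\<Sum>j\<in>J. \<omega> j)\<bar> \<le> (\<Sum>j\<in>J. \<bar>cutoff a (c * \<omega> j)\<bar>)"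
proof -
  have "c * (\<Sum>j\<in>J. \<omega> j) = (\<Sum>j\<in>J. cutoff a (c * \<omega> j))"
    using assms by (auto simp: cutoff_def sum_distrib_left intro!: sum.cong)
  then show ?thesis by (simp add: sum_abs)
qed

lemma scaled_sum_in_interval_cases:
  assumes "c * (\<Sum>j\<in>I. \<omega> j) \<in> {x-h..x+h}" and "4*h \<le> \<bar>x\<bar>"
  shows "\<bar>x\<bar>/4 \<le> (\<Sum>j\<in>I. \<bar>cutoff a (c * \<omega> j)\<bar>)
    \<or> (\<exists>i\<in>I. a < \<bar>c * \<omega> i\<bar> \<and> \<bar>x\<bar>/4 \<le> \<bar>c * (\<Sum>j\<in>I-{i}. \<omega> j)\<bar>)
    \<or> (\<exists>i\<in>I. \<bar>c * (\<Sum>j\<in>I-{i}. \<omega> j)\<bar> < \<bar>x\<bar>/4)"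
proof (cases "\<exists>i\<in>I. a < \<bar>c * \<omega> i\<bar>")
  case True
  then show ?thesis by (auto simp: not_less)
next
  case False
  then have "\<bar>c * (\<Sum>j\<in>I. \<omega> j)\<bar> \<le> (\<Sum>j\<in>I. \<bar>cutoff a (c * \<omega> j)\<bar>)"
    by (intro abs_scaled_sum_le_sum_cutoff) (simp add: not_less)
  moreover have "\<bar>x\<bar> - h \<le> \<bar>c * (\<Sum>j\<in>I. \<omega> j)\<bar>" using assms(1) by (auto simp: abs_if)
  ultimately show ?thesis using assms(2) by auto
qed

(* The bound of measure_scaled_sum_in_interval for the cut-off level a = r^2 and x^2 = r^6. *)
lemma interval_decay_arith:
  fixes L B N c h r :: real
  assumes L: "0 \<le> L" and N: "0 \<le> N" and c: "0 \<le> c" and NNc: "N^2 * c \<le> B" and Nc: "N * c \<le> B"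
    and r: "1 \<le> r" and h: "0 \<le> h" "h \<le> r^2"
  defines "\<theta> \<equiv> 32*L*N^2*c*r^2/r^6" and "\<beta> \<equiv> 2*L*c/r^2"
  shows "\<theta> + N * (\<beta> * (\<theta> + N*\<beta>) + L*(4*h*c/r^6)) \<le> (36*L*B + 68*L^2*B^2)/r^4"
proof -
  define p where "p = L*N^2*c"
  define q where "q = L*N*c"
  have p: "0 \<le> p" "p \<le> L*B" and q: "0 \<le> q" "q \<le> L*B"
    using mult_left_mono[OF NNc L] mult_left_mono[OF Nc L] L N c
    by (simp_all add: p_def q_def mult.assoc)
  have r2: "1 \<le> r^2" using r by (simp add: one_le_power)
  have "\<theta> + N * (\<beta> * (\<theta> + N*\<beta>) + L*(4*h*c/r^6))
      = (32*p*r^2 + 64*p*q + 4*q^2*r^2 + 4*h*q) / r^6"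
    using r by (simp add: \<theta>_def \<beta>_def p_def q_def field_simps power2_eq_square eval_nat_numeral)
  also have "\<dots> \<le> (32*(L*B)*r^2 + 64*(L*B)^2*r^2 + 4*(L*B)^2*r^2 + 4*r^2*(L*B)) / r^6"
  proof (intro divide_right_mono add_mono)
    show "32*p*r^2 \<le> 32*(L*B)*r^2" using p by (simp add: mult_right_mono)
    have "p*q \<le> (L*B)*(L*B)" using p q by (intro mult_mono) auto
    then have "64*p*q \<le> 64*(L*B)^2" by (simp add: power2_eq_square)
    also have "\<dots> \<le> 64*(L*B)^2*r^2" using mult_left_mono[OF r2, of "64*(L*B)^2"] by simp
    finally show "64*p*q \<le> 64*(L*B)^2*r^2" .
    show "4*q^2*r^2 \<le> 4*(L*B)^2*r^2" using q by (simp add: power_mono mult_right_mono)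
    show "4*h*q \<le> 4*r^2*(L*B)" using h q by (intro mult_mono) auto
  qed simp
  also have "\<dots> = (36*L*B + 68*L^2*B^2) * r^2 / r^6"
    by (simp add: algebra_simps power2_eq_square)
  also have "\<dots> = (36*L*B + 68*L^2*B^2) / r^4"
    using r by (simp add: field_simps eval_nat_numeral)
  finally show ?thesis .
qed

locale inv_sq_product =
  fixes L :: real and \<mu> :: "'i \<Rightarrow> real measure"
  assumes dominated: "\<And>j. inv_sq_dominated L (\<mu> j)"
begin

lemma prob_space_component: "prob_space (\<mu> j)"
  using dominated by (rule inv_sq_dominated_prob_space)

lemma sets_component [measurable_cong]: "sets (\<mu> j) = sets borel"
  using dominated by (rule inv_sq_dominated_sets)

lemma space_component [simp]: "space (\<mu> j) = UNIV"
  using sets_eq_imp_space_eq[OF sets_component] by simp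

lemma L_pos: "0 < L"
  using dominated by (rule inv_sq_dominated_pos)

lemma prob_space_product: "prob_space (PiM I \<mu>)"
  by (rule prob_space_PiM) (rule prob_space_component)

lemma nn_integral_PiM_component:
  assumes "j \<in> J" and f: "f \<in> borel_measurable borel"
  shows "(\<integral>\<^sup>+ \<omega>. f (\<omega> j) \<partial>PiM J \<mu>) = (\<integral>\<^sup>+ w. f w \<partial>\<mu> j)"
proof -
  have "distr (PiM J \<mu>) (\<mu> j) (\<lambda>\<omega>. \<omega> j) = \<mu> j"
    using assms by (intro distr_PiM_component prob_space_component)
  moreover have "f \<in> borel_measurable (\<mu> j)" using f by simp
  ultimately show ?thesis
    using nn_integral_distr[of "\<lambda>\<omega>. \<omega> j" "PiM J \<mu>" "\<mu> j" f] assms by simp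
qed

lemma nn_integral_PiM_remove:
  assumes I: "finite I" "i \<in> I" and f: "f \<in> borel_measurable (PiM I \<mu>)"
  shows "(\<integral>\<^sup>+ \<omega>. f \<omega> \<partial>PiM I \<mu>) = (\<integral>\<^sup>+ X. (\<integral>\<^sup>+ y. f (X(i:=y)) \<partial>\<mu> i) \<partial>PiM (I-{i}) \<mu>)"
proof -
  let ?upd = "\<lambda>(y, X). X(i := y)"
  have I_eq: "insert i (I - {i}) = I" using I by auto
  have distr_upd: "distr (\<mu> i \<Otimes>\<^sub>M PiM (I-{i}) \<mu>) (PiM I \<mu>) ?upd = PiM I \<mu>"
    using distr_pair_PiM_eq_PiM[of "I-{i}" \<mu> i] prob_space_component unfolding I_eq by blast
  have upd_measurable: "?upd \<in> measurable (\<mu> i \<Otimes>\<^sub>M PiM (I-{i}) \<mu>) (PiM I \<mu>)"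
    using measurable_fun_upd[where J="I-{i}" and I=I and i=i and M=\<mu> and N="\<mu> i \<Otimes>\<^sub>M PiM (I-{i}) \<mu>"
        and f=snd and h=fst] I
    by (simp add: case_prod_beta' insert_absorb)
  interpret P: prob_space "PiM (I-{i}) \<mu>" by (rule prob_space_product)
  interpret C: prob_space "\<mu> i" by (rule prob_space_component)
  interpret pair_sigma_finite "\<mu> i" "PiM (I-{i}) \<mu>" ..
  have "(\<integral>\<^sup>+ \<omega>. f \<omega> \<partial>PiM I \<mu>) = (\<integral>\<^sup>+ p. f (?upd p) \<partial>(\<mu> i \<Otimes>\<^sub>M PiM (I-{i}) \<mu>))"
    by (subst distr_upd[symmetric], rule nn_integral_distr[OF upd_measurable]) (simp add: f)
  also have "\<dots> = (\<integral>\<^sup>+ X. (\<integral>\<^sup>+ y. f (X(i:=y)) \<partial>\<mu> i) \<partial>PiM (I-{i}) \<mu>)"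
    using nn_integral_snd[OF measurable_comp[OF upd_measurable f]] by (simp add: comp_def)
  finally show ?thesis .
qed

lemma measure_sum_cutoff_ge:
  assumes J: "finite J" and c: "0 \<le> c" and a: "0 < a" and s: "0 < s"
  shows "measure (PiM J \<mu>) {\<omega>\<in>space (PiM J \<mu>). s \<le> (\<Sum>j\<in>J. \<bar>cutoff a (c * \<omega> j)\<bar>)}
     \<le> 2*L*(real (card J))^2*c*a/s^2"
proof -
  let ?P = "PiM J \<mu>" and ?N = "real (card J)"
  let ?A = "{\<omega>\<in>space ?P. s \<le> (\<Sum>j\<in>J. \<bar>cutoff a (c * \<omega> j)\<bar>)}"
  have A: "?A \<in> sets ?P" by measurable
  have Chebyshev:
    "indicator ?A \<omega> \<le> ennreal (?N/s^2) * (\<Sum>j\<in>J. ennreal ((cutoff a (c * \<omega> j))^2))" for \<omega>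
  proof (cases "\<omega> \<in> ?A")
    case True
    then have "s^2 \<le> (\<Sum>j\<in>J. \<bar>cutoff a (c * \<omega> j)\<bar> * 1)^2"
      using s by (intro power_mono) auto
    also have "\<dots> \<le> (\<Sum>j\<in>J. \<bar>cutoff a (c * \<omega> j)\<bar>^2) * (\<Sum>j\<in>J. 1^2)"
      by (rule Cauchy_Schwarz_ineq_sum)
    finally have "1 \<le> ?N/s^2 * (\<Sum>j\<in>J. (cutoff a (c * \<omega> j))^2)"
      using s by (simp add: field_simps)
    then show ?thesis using True s by (simp flip: ennreal_mult')
  qed simp
  have "emeasure ?P ?A = (\<integral>\<^sup>+ \<omega>. indicator ?A \<omega> \<partial>?P)"
    using A by simp
  also have "\<dots> \<le> (\<integral>\<^sup>+ \<omega>. ennreal (?N/s^2) * (\<Sum>j\<in>J. ennreal ((cutoff a (c * \<omega> j))^2)) \<partial>?P)"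
    using Chebyshev by (intro nn_integral_mono) blast
  also have "\<dots> = ennreal (?N/s^2) * (\<Sum>j\<in>J. (\<integral>\<^sup>+ \<omega>. ennreal ((cutoff a (c * \<omega> j))^2) \<partial>?P))"
    by (simp add: nn_integral_cmult nn_integral_sum del: sum_ennreal)
  also have "\<dots> = ennreal (?N/s^2) * (\<Sum>j\<in>J. (\<integral>\<^sup>+ w. ennreal ((cutoff a (c * w))^2) \<partial>\<mu> j))"
    by (intro arg_cong[where f="\<lambda>x. ennreal (?N/s^2) * x"] sum.cong refl nn_integral_PiM_component)
      auto
  also have "\<dots> \<le> ennreal (?N/s^2) * (\<Sum>j\<in>J. ennreal (2*L*a*c))"
    using nn_integral_cutoff_sq[OF dominated c a] by (intro mult_left_mono sum_mono) auto
  also have "\<dots> = ennreal (2*L*?N^2*c*a/s^2)"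
    using L_pos a c by (simp add: ennreal_of_nat_eq_real_of_nat ennreal_mult'[symmetric] power2_eq_square field_simps)
  finally show ?thesis
    using L_pos a c s unfolding measure_def by (intro enn2real_leI) auto
qed

lemma measure_PiM_component_scaled_gt:
  assumes "j \<in> J" and "0 \<le> c" "0 < a"
  shows "measure (PiM J \<mu>) {\<omega>\<in>space (PiM J \<mu>). a < \<bar>c * \<omega> j\<bar>} \<le> 2*L*c/a"
proof -
  have "distr (PiM J \<mu>) (\<mu> j) (\<lambda>\<omega>. \<omega> j) = \<mu> j"
    using assms by (intro distr_PiM_component prob_space_component)
  then have "measure (PiM J \<mu>) ((\<lambda>\<omega>. \<omega> j) -` {w. a < \<bar>c * w\<bar>} \<inter> space (PiM J \<mu>))
      = measure (\<mu> j) {w. a < \<bar>c * w\<bar>}"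
    using measure_distr[of "\<lambda>\<omega>. \<omega> j" "PiM J \<mu>" "\<mu> j" "{w. a < \<bar>c * w\<bar>}"] assms by simp
  then show ?thesis
    using measure_abs_scaled_gt[OF dominated assms(2,3)] by (simp add: Int_def conj_commute)
qed

lemma measure_scaled_sum_ge:
  assumes J: "finite J" and c: "0 \<le> c" and a: "0 < a" and s: "0 < s"
  shows "measure (PiM J \<mu>) {\<omega>\<in>space (PiM J \<mu>). s \<le> \<bar>c * (\<Sum>j\<in>J. \<omega> j)\<bar>}
     \<le> 2*L*(real (card J))^2*c*a/s^2 + real (card J) * (2*L*c/a)"
proof -
  let ?P = "PiM J \<mu>"
  let ?A = "{\<omega>\<in>space ?P. s \<le> (\<Sum>j\<in>J. \<bar>cutoff a (c * \<omega> j)\<bar>)}"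
  let ?B = "\<lambda>j. {\<omega>\<in>space ?P. a < \<bar>c * \<omega> j\<bar>}"
  interpret prob_space ?P by (rule prob_space_product)
  have events: "?A \<in> events" "\<And>j. j \<in> J \<Longrightarrow> ?B j \<in> events" by measurable
  then have union_event: "(\<Union>j\<in>J. ?B j) \<in> events" using J by blast
  have "{\<omega>\<in>space ?P. s \<le> \<bar>c * (\<Sum>j\<in>J. \<omega> j)\<bar>} \<subseteq> ?A \<union> (\<Union>j\<in>J. ?B j)"
    using abs_scaled_sum_le_sum_cutoff[of J c _ a] by (force simp: not_less)
  then have "measure ?P {\<omega>\<in>space ?P. s \<le> \<bar>c * (\<Sum>j\<in>J. \<omega> j)\<bar>} \<le> measure ?P ?A + measure ?P (\<Union>j\<in>J. ?B j)"
    using events union_event by (intro order_trans[OF finite_measure_mono measure_subadditive]) auto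
  also have "measure ?P (\<Union>j\<in>J. ?B j) \<le> (\<Sum>j\<in>J. measure ?P (?B j))"
    using J events by (intro finite_measure_subadditive_finite) auto
  also have "\<dots> \<le> (\<Sum>j\<in>J. 2*L*c/a)"
    using c a by (intro sum_mono measure_PiM_component_scaled_gt)
  finally show ?thesis
    using measure_sum_cutoff_ge[OF J c a s] by simp
qed

lemma fun_upd_in_space_PiM:
  assumes "X \<in> space (PiM (I-{i}) \<mu>)" "i \<in> I"
  shows "X(i:=y) \<in> space (PiM I \<mu>)"
  using assms by (auto simp: space_PiM PiE_def extensional_def)

lemma measure_component_gt_rest_ge:
  assumes I: "finite I" "i \<in> I" and c: "0 \<le> c" and a: "0 < a" and s: "0 < s"
  shows "measure (PiM I \<mu>) {\<omega>\<in>space (PiM I \<mu>). a < \<bar>c * \<omega> i\<bar> \<and> s \<le> \<bar>c * (\<Sum>j\<in>I-{i}. \<omega> j)\<bar>}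
     \<le> (2*L*c/a) * (2*L*(real (card I))^2*c*a/s^2 + real (card I) * (2*L*c/a))"
proof -
  let ?P = "PiM I \<mu>" and ?P' = "PiM (I-{i}) \<mu>" and ?N = "real (card I)"
  let ?E = "{\<omega>\<in>space ?P. a < \<bar>c * \<omega> i\<bar> \<and> s \<le> \<bar>c * (\<Sum>j\<in>I-{i}. \<omega> j)\<bar>}"
  let ?G = "{w. a < \<bar>c * w\<bar>}"
  let ?R = "{X\<in>space ?P'. s \<le> \<bar>c * (\<Sum>j\<in>I-{i}. X j)\<bar>}"
  let ?\<beta> = "2*L*c/a"
  interpret C: prob_space "\<mu> i" by (rule prob_space_component)
  interpret P': prob_space ?P' by (rule prob_space_product)
  have E: "?E \<in> sets ?P" using I by measurable
  have R: "?R \<in> sets ?P'" by measurable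
  have G: "?G \<in> sets (\<mu> i)" by measurable
  have "measure ?P' ?R \<le> 2*L*(real (card (I-{i})))^2*c*a/s^2 + real (card (I-{i})) * ?\<beta>"
    using I c a s by (intro measure_scaled_sum_ge) auto
  also have "\<dots> \<le> 2*L*?N^2*c*a/s^2 + ?N * ?\<beta>"
    using I c a L_pos card_mono[of I "I-{i}"]
    by (intro add_mono divide_right_mono mult_right_mono mult_left_mono power_mono) auto
  finally have rest: "measure ?P' ?R \<le> 2*L*?N^2*c*a/s^2 + ?N * ?\<beta>" .
  have "emeasure ?P ?E = (\<integral>\<^sup>+ X. (\<integral>\<^sup>+ y. indicator ?E (X(i:=y)) \<partial>\<mu> i) \<partial>?P')"
    using E I by (simp add: nn_integral_PiM_remove[symmetric])
  also have "\<dots> = (\<integral>\<^sup>+ X. emeasure (\<mu> i) ?G * indicator ?R X \<partial>?P')"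
  proof (rule nn_integral_cong)
    fix X assume X: "X \<in> space ?P'"
    have "indicator ?E (X(i:=y)) = indicator ?G y * (indicator ?R X :: ennreal)" for y
      using fun_upd_in_space_PiM[OF X I(2)] X by (auto simp: indicator_def)
    then show "(\<integral>\<^sup>+ y. indicator ?E (X(i:=y)) \<partial>\<mu> i) = emeasure (\<mu> i) ?G * indicator ?R X"
      using G by (simp add: nn_integral_multc)
  qed
  also have "\<dots> = emeasure (\<mu> i) ?G * emeasure ?P' ?R"
    using R by (simp add: nn_integral_cmult_indicator mult.commute)
  also have "\<dots> \<le> ennreal ?\<beta> * ennreal (2*L*?N^2*c*a/s^2 + ?N * ?\<beta>)"
    using measure_abs_scaled_gt[OF dominated c a] rest
    by (intro mult_mono) (auto simp: C.emeasure_eq_measure P'.emeasure_eq_measure intro!: ennreal_leI)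
  also have "\<dots> = ennreal (?\<beta> * (2*L*?N^2*c*a/s^2 + ?N * ?\<beta>))"
    by (rule ennreal_mult'[symmetric]) (use L_pos c a in simp)
  finally show ?thesis
    using L_pos c a s unfolding measure_def by (intro enn2real_leI) auto
qed

lemma measure_rest_small_sum_in_interval:
  assumes I: "finite I" "i \<in> I" and c: "0 \<le> c" and h: "0 \<le> h" "4*h \<le> \<bar>x\<bar>" and x: "x \<noteq> 0"
  shows "measure (PiM I \<mu>)
      {\<omega>\<in>space (PiM I \<mu>). \<bar>c * (\<Sum>j\<in>I-{i}. \<omega> j)\<bar> < \<bar>x\<bar>/4 \<and> c * (\<Sum>j\<in>I. \<omega> j) \<in> {x-h..x+h}}
     \<le> L * (4*h*c/x^2)"
proof -
  let ?P = "PiM I \<mu>" and ?P' = "PiM (I-{i}) \<mu>"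
  let ?E = "{\<omega>\<in>space ?P. \<bar>c * (\<Sum>j\<in>I-{i}. \<omega> j)\<bar> < \<bar>x\<bar>/4 \<and> c * (\<Sum>j\<in>I. \<omega> j) \<in> {x-h..x+h}}"
  interpret C: prob_space "\<mu> i" by (rule prob_space_component)
  interpret P': prob_space ?P' by (rule prob_space_product)
  have E: "?E \<in> sets ?P" using I by measurable
  have section_bound: "(\<integral>\<^sup>+ y. indicator ?E (X(i:=y)) \<partial>\<mu> i) \<le> ennreal (L * (4*h*c/x^2))"
    if X: "X \<in> space ?P'" for X
  proof (cases "\<bar>c * (\<Sum>j\<in>I-{i}. X j)\<bar> < \<bar>x\<bar>/4")
    case False
    then have "indicator ?E (X(i:=y)) = (0::ennreal)" for y
      by (auto simp: indicator_def)
    then show ?thesis by simp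
  next
    case True
    let ?S = "{y. c * y + c * (\<Sum>j\<in>I-{i}. X j) \<in> {x-h..x+h}}"
    have "(\<Sum>j\<in>I. (X(i:=y)) j) = y + (\<Sum>j\<in>I-{i}. X j)" for y
      using I by (simp add: sum.remove)
    then have "indicator ?E (X(i:=y)) \<le> (indicator ?S y :: ennreal)" for y
      by (auto simp: indicator_def distrib_left)
    then have "(\<integral>\<^sup>+ y. indicator ?E (X(i:=y)) \<partial>\<mu> i) \<le> (\<integral>\<^sup>+ y. indicator ?S y \<partial>\<mu> i)"
      by (intro nn_integral_mono) blast
    also have "\<dots> = ennreal (measure (\<mu> i) ?S)"
      by (simp add: C.emeasure_eq_measure)
    also have "\<dots> \<le> ennreal (L * (4*h*c/x^2))"
      using measure_shifted_scaled_in_interval[OF dominated c True h x] by (rule ennreal_leI)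
    finally show ?thesis .
  qed
  have "emeasure ?P ?E = (\<integral>\<^sup>+ X. (\<integral>\<^sup>+ y. indicator ?E (X(i:=y)) \<partial>\<mu> i) \<partial>?P')"
    using E I by (simp add: nn_integral_PiM_remove[symmetric])
  also have "\<dots> \<le> (\<integral>\<^sup>+ X. ennreal (L * (4*h*c/x^2)) \<partial>?P')"
    by (rule nn_integral_mono) (rule section_bound)
  also have "\<dots> = ennreal (L * (4*h*c/x^2))"
    by (simp add: P'.emeasure_space_1)
  finally show ?thesis
    using L_pos c h unfolding measure_def by (intro enn2real_leI) auto
qed

lemma measure_scaled_sum_in_interval:
  assumes I: "finite I" and c: "0 \<le> c" and a: "0 < a" and h: "0 \<le> h" "4*h \<le> \<bar>x\<bar>" and x: "x \<noteq> 0"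
  defines "N \<equiv> real (card I)" and "\<theta> \<equiv> 32*L*(real (card I))^2*c*a/x^2" and "\<beta> \<equiv> 2*L*c/a"
  shows "measure (PiM I \<mu>) {\<omega>\<in>space (PiM I \<mu>). c * (\<Sum>j\<in>I. \<omega> j) \<in> {x-h..x+h}}
     \<le> \<theta> + N * (\<beta> * (\<theta> + N*\<beta>) + L*(4*h*c/x^2))"
proof -
  let ?P = "PiM I \<mu>"
  define s where "s = \<bar>x\<bar>/4"
  have s: "0 < s" and \<theta>_eq: "\<theta> = 2*L*N^2*c*a/s^2"
    using x by (simp_all add: s_def \<theta>_def N_def power_divide)
  let ?T = "{\<omega>\<in>space ?P. c * (\<Sum>j\<in>I. \<omega> j) \<in> {x-h..x+h}}"
  let ?A = "{\<omega>\<in>space ?P. s \<le> (\<Sum>j\<in>I. \<bar>cutoff a (c * \<omega> j)\<bar>)}"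
  let ?B = "\<lambda>i. {\<omega>\<in>space ?P. a < \<bar>c * \<omega> i\<bar> \<and> s \<le> \<bar>c * (\<Sum>j\<in>I-{i}. \<omega> j)\<bar>}"
  let ?D = "\<lambda>i. {\<omega>\<in>space ?P. \<bar>c * (\<Sum>j\<in>I-{i}. \<omega> j)\<bar> < \<bar>x\<bar>/4 \<and> c * (\<Sum>j\<in>I. \<omega> j) \<in> {x-h..x+h}}"
  interpret prob_space ?P by (rule prob_space_product)
  have events: "?A \<in> events" "\<And>i. i \<in> I \<Longrightarrow> ?B i \<in> events" "\<And>i. i \<in> I \<Longrightarrow> ?D i \<in> events"
    by measurable
  then have union_event: "(\<Union>i\<in>I. ?B i \<union> ?D i) \<in> events" using I by blast
  have "?T \<subseteq> ?A \<union> (\<Union>i\<in>I. ?B i \<union> ?D i)"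
    using scaled_sum_in_interval_cases[of c _ I x h a] h unfolding s_def by fastforce
  then have "measure ?P ?T \<le> measure ?P ?A + measure ?P (\<Union>i\<in>I. ?B i \<union> ?D i)"
    using events union_event by (intro order_trans[OF finite_measure_mono measure_subadditive]) auto
  also have "measure ?P (\<Union>i\<in>I. ?B i \<union> ?D i) \<le> (\<Sum>i\<in>I. measure ?P (?B i) + measure ?P (?D i))"
    using I events
    by (intro order_trans[OF finite_measure_subadditive_finite sum_mono] measure_subadditive) auto
  also have "\<dots> \<le> (\<Sum>i\<in>I. \<beta> * (\<theta> + N*\<beta>) + L*(4*h*c/x^2))"
    unfolding \<theta>_eq N_def \<beta>_def
    using measure_component_gt_rest_ge[OF I _ c a s] measure_rest_small_sum_in_interval[OF I _ c h x]
    by (intro sum_mono add_mono) auto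
  also have "measure ?P ?A \<le> \<theta>"
    unfolding \<theta>_eq N_def using measure_sum_cutoff_ge[OF I c a s] .
  finally show ?thesis by (simp add: N_def)
qed

lemma measure_scaled_sum_cube_decay:
  assumes I: "finite I" and c: "0 \<le> c" and B: "(real (card I))^2 * c \<le> B"
    and r: "4 \<le> r" "\<bar>x\<bar> = r^3" and h: "0 \<le> h" "h \<le> r^2"
  shows "measure (distr (PiM I \<mu>) borel (\<lambda>\<omega>. c * (\<Sum>j\<in>I. \<omega> j))) {x-h..x+h}
     \<le> (36*L*B + 68*L^2*B^2) / r^4"
proof -
  let ?N = "real (card I)"
  have "r^6 = (r^3)^2" by (simp flip: power_mult)
  then have r6: "r^6 = x^2" by (simp add: r(2)[symmetric])
  have "0 < r^3" using r by simp
  then have x: "x \<noteq> 0" using r by auto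
  have "4*h \<le> r * r^2" using h r by (intro mult_mono) auto
  then have h_x: "4*h \<le> \<bar>x\<bar>" using r by (simp add: power2_eq_square power3_eq_cube)
  have "?N \<le> ?N^2"
    using of_nat_mono[OF le_square[of "card I"], where 'a=real] by (simp add: power2_eq_square)
  then have "?N * c \<le> B" using mult_right_mono[OF _ c] B by (meson order_trans)
  have "measure (distr (PiM I \<mu>) borel (\<lambda>\<omega>. c * (\<Sum>j\<in>I. \<omega> j))) {x-h..x+h}
      = measure (PiM I \<mu>) {\<omega>\<in>space (PiM I \<mu>). c * (\<Sum>j\<in>I. \<omega> j) \<in> {x-h..x+h}}"
    by (subst measure_distr) (auto simp: vimage_def Int_def conj_commute)
  also have "\<dots> \<le> 32*L*?N^2*c*r^2/r^6
      + ?N * ((2*L*c/r^2) * (32*L*?N^2*c*r^2/r^6 + ?N * (2*L*c/r^2)) + L*(4*h*c/r^6))"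
    using measure_scaled_sum_in_interval[OF I c _ h(1) h_x x, of "r^2"] r unfolding r6[symmetric]
    by simp
  also have "\<dots> \<le> (36*L*B + 68*L^2*B^2) / r^4"
    using L_pos c B \<open>?N * c \<le> B\<close> r h by (intro interval_decay_arith) auto
  finally show ?thesis .
qed

lemma measure_scaled_sum_interval_decay:
  assumes I: "finite I" and c: "0 \<le> c" and B: "(real (card I))^2 * c \<le> B"
    and x: "64 \<le> \<bar>x\<bar>" and h: "0 \<le> h" "h \<le> \<bar>x\<bar> powr (2/3)"
  shows "measure (distr (PiM I \<mu>) borel (\<lambda>\<omega>. c * (\<Sum>j\<in>I. \<omega> j))) {x-h..x+h}
     \<le> (36*L*B + 68*L^2*B^2) / \<bar>x\<bar> powr (4/3)"
proof -
  define r where "r = \<bar>x\<bar> powr (1/3)"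
  have r_power: "r^n = \<bar>x\<bar> powr (real n / 3)" for n
    using x unfolding r_def by (subst powr_power) auto
  then have r3: "\<bar>x\<bar> = r^3" and r2: "r^2 = \<bar>x\<bar> powr (2/3)" and r4: "r^4 = \<bar>x\<bar> powr (4/3)"
    using r_power[of 3] r_power[of 2] r_power[of 4] x by simp_all
  have "4 \<le> r"
  proof (rule ccontr)
    assume "\<not> 4 \<le> r"
    then have "r^3 < 4^3" by (intro power_strict_mono) (auto simp: r_def)
    then show False using x r3 by simp
  qed
  then show ?thesis
    using measure_scaled_sum_cube_decay[OF I c B _ r3 h(1)] h r2 r4 by simp
qed

end

section \<open>Convolutions and averages over scaled sums\<close>

lemma convolution_distr_PiM_scaled_sum:
  fixes \<mu> :: "'i \<Rightarrow> real measure"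
  assumes prob: "\<And>j. prob_space (\<mu> j)" and sets [measurable_cong]: "\<And>j. sets (\<mu> j) = sets borel"
    and IJ: "finite I" "finite J" "I \<inter> J = {}"
  shows "distr (PiM I \<mu>) borel (\<lambda>\<omega>. c * (\<Sum>j\<in>I. \<omega> j)) \<star> distr (PiM J \<mu>) borel (\<lambda>\<omega>. c * (\<Sum>j\<in>J. \<omega> j))
     = distr (PiM (I \<union> J) \<mu>) borel (\<lambda>\<omega>. c * (\<Sum>j\<in>I \<union> J. \<omega> j))"
proof -
  let ?S = "\<lambda>K \<omega>. c * (\<Sum>j\<in>K. \<omega> j)"
  interpret I: prob_space "PiM I \<mu>" by (rule prob_space_PiM) (rule prob)
  interpret J: prob_space "PiM J \<mu>" by (rule prob_space_PiM) (rule prob)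
  interpret product_sigma_finite \<mu>
    unfolding product_sigma_finite_def using prob by (auto intro: prob_space_imp_sigma_finite)
  have S_J: "sigma_finite_measure (distr (PiM J \<mu>) borel (?S J))"
    by (intro prob_space_imp_sigma_finite J.prob_space_distr) measurable
  have merge_sum: "?S (I \<union> J) (merge I J p) = ?S I (fst p) + ?S J (snd p)" for p
  proof -
    have "(\<Sum>j\<in>I. merge I J p j) = (\<Sum>j\<in>I. fst p j)" "(\<Sum>j\<in>J. merge I J p j) = (\<Sum>j\<in>J. snd p j)"
      using IJ by (auto simp: merge_def split: prod.split intro!: sum.cong)
    then show ?thesis
      using IJ by (simp add: sum.union_disjoint distrib_left)
  qed
  have "distr (PiM I \<mu>) borel (?S I) \<star> distr (PiM J \<mu>) borel (?S J)
      = distr (distr (PiM I \<mu> \<Otimes>\<^sub>M PiM J \<mu>) (borel \<Otimes>\<^sub>M borel) (\<lambda>(\<omega>, \<omega>'). (?S I \<omega>, ?S J \<omega>'))) borel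
          (\<lambda>(x, y). x + y)"
    unfolding convolution_def by (subst pair_measure_distr[OF _ _ S_J]) simp_all
  also have "\<dots> = distr (PiM I \<mu> \<Otimes>\<^sub>M PiM J \<mu>) borel (\<lambda>p. ?S (I \<union> J) (merge I J p))"
    by (subst distr_distr) (auto intro!: distr_cong simp: merge_sum)
  also have "\<dots> = distr (distr (PiM I \<mu> \<Otimes>\<^sub>M PiM J \<mu>) (PiM (I \<union> J) \<mu>) (merge I J)) borel (?S (I \<union> J))"
    by (subst distr_distr) (auto simp: comp_def)
  also have "\<dots> = distr (PiM (I \<union> J) \<mu>) borel (?S (I \<union> J))"
    using IJ by (simp add: distr_merge)
  finally show ?thesis .
qed

lemma sed_sum_eq_distr_PiM_shift:
  assumes prob: "prob_space \<nu>" and sets [measurable_cong]: "sets \<nu> = sets borel"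
  shows "sed_sum m t \<nu> = distr (PiM {k..<k+m} (\<lambda>_. \<nu>)) borel (\<lambda>\<omega>. t^2 * (\<Sum>j\<in>{k..<k+m}. \<omega> j))"
proof -
  let ?shift = "\<lambda>\<omega>. \<lambda>i\<in>{..<m}. \<omega> (i + k)"
  have shift_distr: "distr (PiM {k..<k+m} (\<lambda>_. \<nu>)) (PiM {..<m} (\<lambda>_. \<nu>)) ?shift = PiM {..<m} (\<lambda>_. \<nu>)"
    using distr_PiM_reindex[of "{k..<k+m}" "\<lambda>_. \<nu>" "\<lambda>i. i + k" "{..<m}"] prob by (auto simp: inj_on_def)
  have shift_sum: "(\<Sum>i<m. \<omega> (i + k)) = (\<Sum>j\<in>{k..<k+m}. \<omega> j)" for \<omega> :: "nat \<Rightarrow> real"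
    using sum.shift_bounds_nat_ivl[of \<omega> 0 k m] by (simp add: atLeast0LessThan add.commute)
  have "sed_sum m t \<nu> = distr (distr (PiM {k..<k+m} (\<lambda>_. \<nu>)) (PiM {..<m} (\<lambda>_. \<nu>)) ?shift) borel
      (\<lambda>\<gamma>. t^2 * (\<Sum>i<m. \<gamma> i))"
    unfolding sed_sum_def shift_distr ..
  also have "\<dots> = distr (PiM {k..<k+m} (\<lambda>_. \<nu>)) borel (\<lambda>\<omega>. t^2 * (\<Sum>j\<in>{k..<k+m}. \<omega> j))"
    by (subst distr_distr) (auto intro!: distr_cong simp: shift_sum)
  finally show ?thesis .
qed

lemma convolution_sed_sum:
  assumes "prob_space \<nu>1" "sets \<nu>1 = sets borel" "prob_space \<nu>2" "sets \<nu>2 = sets borel"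
  shows "sed_sum k t \<nu>1 \<star> sed_sum m t \<nu>2
    = distr (PiM {..<k+m} (\<lambda>j. if j < k then \<nu>1 else \<nu>2)) borel (\<lambda>\<omega>. t^2 * (\<Sum>j\<in>{..<k+m}. \<omega> j))"
proof -
  let ?\<mu> = "\<lambda>j. if j < k then \<nu>1 else \<nu>2"
  have "sed_sum k t \<nu>1 = distr (PiM {..<k} ?\<mu>) borel (\<lambda>\<omega>. t^2 * (\<Sum>j\<in>{..<k}. \<omega> j))"
    unfolding sed_sum_def by (intro distr_cong PiM_cong) auto
  moreover have "sed_sum m t \<nu>2 = distr (PiM {k..<k+m} ?\<mu>) borel (\<lambda>\<omega>. t^2 * (\<Sum>j\<in>{k..<k+m}. \<omega> j))"
    using assms by (subst sed_sum_eq_distr_PiM_shift[where k=k]) (auto intro!: distr_cong PiM_cong)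
  moreover have "distr (PiM {..<k} ?\<mu>) borel (\<lambda>\<omega>. t^2 * (\<Sum>j\<in>{..<k}. \<omega> j))
      \<star> distr (PiM {k..<k+m} ?\<mu>) borel (\<lambda>\<omega>. t^2 * (\<Sum>j\<in>{k..<k+m}. \<omega> j))
    = distr (PiM ({..<k} \<union> {k..<k+m}) ?\<mu>) borel (\<lambda>\<omega>. t^2 * (\<Sum>j\<in>{..<k} \<union> {k..<k+m}. \<omega> j))"
    by (rule convolution_distr_PiM_scaled_sum) (use assms in auto)
  moreover have "{..<k} \<union> {k..<k+m} = {..<k+m}" by auto
  ultimately show ?thesis by simp
qed

lemma powr_64_thirds: "(64::real) powr (real n / 3) = 4 ^ n"
proof -
  have "(64::real) powr (real n / 3) = (4 powr 3) powr (real n / 3)" by simp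
  also have "\<dots> = 4 ^ n" by (simp add: powr_powr powr_realpow)
  finally show ?thesis .
qed

lemma decay_bound_of_far_bound:
  fixes u D M x :: real
  assumes "u \<le> M" "0 \<le> M" "0 \<le> D" and far: "64 \<le> \<bar>x\<bar> \<Longrightarrow> u \<le> D / \<bar>x\<bar> powr (4/3)"
  shows "u \<le> (2*D + 257*M) / (1 + \<bar>x\<bar> powr (4/3))"
proof (cases "64 \<le> \<bar>x\<bar>")
  case True
  define q where "q = \<bar>x\<bar> powr (4/3)"
  have "1 \<le> q" unfolding q_def using True by (intro ge_one_powr_ge_zero) auto
  moreover have "D \<le> D * q" using mult_left_mono[OF \<open>1 \<le> q\<close> \<open>0 \<le> D\<close>] by simp
  ultimately have "D / q \<le> 2*D / (1 + q)"
    by (simp add: field_simps)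
  also have "\<dots> \<le> (2*D + 257*M) / (1 + q)"
    using \<open>1 \<le> q\<close> assms by (intro divide_right_mono) auto
  finally show ?thesis using far True by (simp add: q_def)
next
  case False
  then have "\<bar>x\<bar> powr (4/3) \<le> 64 powr (4/3)" by (intro powr_mono2) auto
  then have "1 + \<bar>x\<bar> powr (4/3) \<le> 257" using powr_64_thirds[of 4] by simp
  then have "M * (1 + \<bar>x\<bar> powr (4/3)) \<le> M * 257"
    using \<open>0 \<le> M\<close> by (rule mult_left_mono)
  then have "M \<le> 257*M / (1 + \<bar>x\<bar> powr (4/3))"
    by (simp add: le_divide_eq add_pos_nonneg)
  also have "\<dots> \<le> (2*D + 257*M) / (1 + \<bar>x\<bar> powr (4/3))"
    using assms by (intro divide_right_mono) (auto intro: add_pos_nonneg)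
  finally show ?thesis using assms by simp
qed

lemma rho_le_of_cauchy_bound:
  fixes rho :: "real \<Rightarrow> real"
  assumes "\<And>x. rho x \<le> L / (1 + x^2)" and "0 \<le> L"
  shows "rho x \<le> L"
  using assms(1)[of x] divide_left_mono[OF _ assms(2), of 1 "1 + x^2"] by (simp add: add_pos_nonneg)

context
  fixes L :: real and rho :: "real \<Rightarrow> real" and \<nu> :: "real measure"
  assumes \<nu>: "prob_space \<nu>" and sets_\<nu> [measurable_cong]: "sets \<nu> = sets borel"
    and rho [measurable]: "rho \<in> borel_measurable borel"
    and rho_nonneg: "\<And>x. 0 \<le> rho x" and rho_le: "\<And>x. rho x \<le> L / (1 + x^2)"
begin

lemma cauchy_bound_nonneg: "0 \<le> L"
  using rho_nonneg[of 0] rho_le[of 0] by simp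

lemma integrable_shifted_density: "integrable \<nu> (\<lambda>s. rho (y + s))"
proof -
  interpret prob_space \<nu> by (rule \<nu>)
  show ?thesis
    using rho_nonneg rho_le_of_cauchy_bound[OF rho_le cauchy_bound_nonneg]
    by (intro integrable_const_bound[where B=L]) auto
qed

lemma integral_shifted_density_le: "(\<integral>s. rho (y + s) \<partial>\<nu>) \<le> L"
proof -
  interpret prob_space \<nu> by (rule \<nu>)
  have "(\<integral>s. rho (y + s) \<partial>\<nu>) \<le> (\<integral>s. L \<partial>\<nu>)"
    using integrable_shifted_density rho_le_of_cauchy_bound[OF rho_le cauchy_bound_nonneg]
    by (intro integral_mono) auto
  then show ?thesis by (simp add: prob_space)
qed

lemma integral_shifted_density_far:
  assumes decay: "\<And>z h. 64 \<le> \<bar>z\<bar> \<Longrightarrow> 0 \<le> h \<Longrightarrow> h \<le> \<bar>z\<bar> powr (2/3) \<Longrightarrow>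
      measure \<nu> {z-h..z+h} \<le> D / \<bar>z\<bar> powr (4/3)"
    and y: "64 \<le> \<bar>y\<bar>"
  shows "(\<integral>s. rho (y + s) \<partial>\<nu>) \<le> L * (D + 1) / \<bar>y\<bar> powr (4/3)"
proof -
  interpret prob_space \<nu> by (rule \<nu>)
  define h where "h = \<bar>y\<bar> powr (2/3)"
  define q where "q = \<bar>y\<bar> powr (4/3)"
  have hq: "h^2 = q" unfolding h_def q_def using y by (subst powr_power) auto
  have h: "0 \<le> h" by (simp add: h_def)
  have q: "0 < q" using y by (simp add: q_def)
  have L: "0 \<le> L" by (rule cauchy_bound_nonneg)
  let ?S = "{-y-h .. -y+h}"
  have pointwise: "rho (y + s) \<le> L * indicator ?S s + L / (1 + q)" for s
  proof (cases "s \<in> ?S")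
    case True
    have "0 \<le> L / (1 + q)" using L q by simp
    then show ?thesis using rho_le_of_cauchy_bound[OF rho_le L, of "y + s"] True by simp
  next
    case False
    then have "h < \<bar>y + s\<bar>" by auto
    then have "q < (y + s)^2"
      using hq h power_strict_mono[of h "\<bar>y + s\<bar>" 2] by simp
    then have "L / (1 + (y + s)^2) \<le> L / (1 + q)"
      using L q by (intro divide_left_mono) auto
    then show ?thesis using rho_le[of "y + s"] False by simp
  qed
  have "integrable \<nu> (\<lambda>s. L * indicator ?S s + L / (1 + q))"
    by (intro Bochner_Integration.integrable_add integrable_mult_right integrable_real_indicator)
      (auto simp: emeasure_eq_measure)
  then have "(\<integral>s. rho (y + s) \<partial>\<nu>) \<le> (\<integral>s. L * indicator ?S s + L / (1 + q) \<partial>\<nu>)"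
    using integrable_shifted_density pointwise by (intro integral_mono) auto
  also have "\<dots> = L * measure \<nu> ?S + L / (1 + q)"
    by (subst Bochner_Integration.integral_add)
      (auto simp: prob_space emeasure_eq_measure intro!: integrable_real_indicator)
  also have "\<dots> \<le> L * (D / q) + L / q"
  proof (intro add_mono mult_left_mono divide_left_mono)
    show "measure \<nu> ?S \<le> D / q" using decay[of "-y" h] y h by (simp add: h_def q_def)
  qed (use L q in auto)
  also have "\<dots> = L * (D + 1) / q"
    using q by (simp add: field_simps)
  finally show ?thesis by (simp add: q_def)
qed

lemma integral_shifted_density_decay:
  assumes "\<And>z h. 64 \<le> \<bar>z\<bar> \<Longrightarrow> 0 \<le> h \<Longrightarrow> h \<le> \<bar>z\<bar> powr (2/3) \<Longrightarrow>
      measure \<nu> {z-h..z+h} \<le> D / \<bar>z\<bar> powr (4/3)"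
    and "0 \<le> D"
  shows "(\<integral>s. rho (y + s) \<partial>\<nu>) \<le> L * (2*D + 259) / (1 + \<bar>y\<bar> powr (4/3))"
proof -
  have "(\<integral>s. rho (y + s) \<partial>\<nu>) \<le> (2 * (L * (D + 1)) + 257 * L) / (1 + \<bar>y\<bar> powr (4/3))"
    using assms integral_shifted_density_le integral_shifted_density_far cauchy_bound_nonneg
    by (intro decay_bound_of_far_bound) auto
  then show ?thesis by (simp add: algebra_simps)
qed

end

section \<open>Self-energies\<close>

lemma prob_density_dens:
  assumes "prob_density p"
  shows "prob_space (dens p)" and "sets (dens p) = sets borel"
proof -
  have "p \<in> borel_measurable borel" and "(\<integral>\<^sup>+ x. ennreal (p x) \<partial>lborel) = 1"
    using assms by (auto simp: prob_density_def)
  then show "prob_space (dens p)"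
    by (intro prob_spaceI) (simp add: dens_def emeasure_density)
qed (simp add: dens_def)

lemma sed_fixpoint_inv_sq_dominated:
  assumes fixpoint: "sed_fixpoint K t rho E \<nu>" and \<nu>: "prob_space \<nu>"
    and rho: "prob_density rho" "\<And>x. rho x \<le> L"
  shows "inv_sq_dominated L \<nu>"
proof -
  let ?D = "dens rho" and ?\<Pi> = "PiM {..<K} (\<lambda>_. \<nu>)"
  let ?F = "\<lambda>(v, \<gamma>). 1 / (v - E - t^2 * (\<Sum>i<K. \<gamma> i))"
  have \<nu>_eq: "\<nu> = distr (?D \<Otimes>\<^sub>M ?\<Pi>) borel ?F"
    using fixpoint by (simp add: sed_fixpoint_def)
  have sets_\<nu> [measurable_cong]: "sets \<nu> = sets borel"
    by (subst \<nu>_eq) simp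
  have rho_measurable [measurable]: "rho \<in> borel_measurable borel"
    using rho by (simp add: prob_density_def)
  note prob_density_dens(2)[OF rho(1), measurable_cong]
  interpret D: prob_space ?D by (rule prob_density_dens(1)[OF rho(1)])
  interpret \<Pi>: prob_space ?\<Pi> by (rule prob_space_PiM) (rule \<nu>)
  interpret pair_sigma_finite ?D ?\<Pi> ..
  have "(\<integral>\<^sup>+ w. h w \<partial>\<nu>) \<le> ennreal L * (\<integral>\<^sup>+ z. h (1/z) \<partial>lborel)"
    if h [measurable]: "h \<in> borel_measurable borel" for h
  proof -
    have "(\<integral>\<^sup>+ w. h w \<partial>\<nu>) = (\<integral>\<^sup>+ p. h (?F p) \<partial>(?D \<Otimes>\<^sub>M ?\<Pi>))"
      by (subst \<nu>_eq, rule nn_integral_distr) simp_all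
    also have "\<dots> = (\<integral>\<^sup>+ \<gamma>. (\<integral>\<^sup>+ v. h (?F (v, \<gamma>)) \<partial>?D) \<partial>?\<Pi>)"
      by (rule nn_integral_snd[symmetric]) measurable
    also have "\<dots> \<le> (\<integral>\<^sup>+ \<gamma>. ennreal L * (\<integral>\<^sup>+ z. h (1/z) \<partial>lborel) \<partial>?\<Pi>)"
    proof (rule nn_integral_mono)
      fix \<gamma> :: "nat \<Rightarrow> real"
      define c where "c = E + t^2 * (\<Sum>i<K. \<gamma> i)"
      have "(\<integral>\<^sup>+ v. h (?F (v, \<gamma>)) \<partial>?D) = (\<integral>\<^sup>+ v. ennreal (rho v) * h (1 / (v - c)) \<partial>lborel)"
        unfolding dens_def c_def by (subst nn_integral_density) (auto simp: diff_diff_eq)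
      also have "\<dots> \<le> (\<integral>\<^sup>+ v. ennreal L * h (1 / (v - c)) \<partial>lborel)"
        using rho(2) by (intro nn_integral_mono mult_right_mono ennreal_leI) auto
      also have "\<dots> = ennreal L * (\<integral>\<^sup>+ v. h (1 / (v - c)) \<partial>lborel)"
        by (rule nn_integral_cmult) measurable
      also have "(\<integral>\<^sup>+ v. h (1 / (v - c)) \<partial>lborel) = (\<integral>\<^sup>+ z. h (1/z) \<partial>lborel)"
        using nn_integral_real_affine[of "\<lambda>z. h (1/z)" 1 "-c"] by simp
      finally show "(\<integral>\<^sup>+ v. h (?F (v, \<gamma>)) \<partial>?D) \<le> ennreal L * (\<integral>\<^sup>+ z. h (1/z) \<partial>lborel)" .
    qed
    also have "\<dots> = ennreal L * (\<integral>\<^sup>+ z. h (1/z) \<partial>lborel)"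
      by (simp add: \<Pi>.emeasure_space_1)
    finally show ?thesis .
  qed
  then show ?thesis
    unfolding inv_sq_dominated_def using \<nu> sets_\<nu> by blast
qed

lemma scaled_coupling_sq_le:
  fixes g G :: real
  assumes "2 \<le> K" "0 \<le> g" "g \<le> G"
  shows "(real (K - 1))^2 * (g / (real K * ln (real K)))^2 \<le> (G / ln 2)^2"
proof -
  have ln: "0 < ln (2::real)" "ln 2 \<le> ln (real K)" using assms by simp_all
  have "(real (K - 1))^2 * (g / (real K * ln (real K)))^2 \<le> (real K * (g / (real K * ln (real K))))^2"
    unfolding power_mult_distrib by (intro mult_right_mono power_mono) auto
  also have "real K * (g / (real K * ln (real K))) = g / ln (real K)"
    using assms by simp
  also have "(g / ln (real K))^2 \<le> (G / ln 2)^2"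
    using assms ln by (intro power_mono frac_le) auto
  finally show ?thesis .
qed

(* 36 L B + 68 L^2 B^2 is the constant of measure_scaled_sum_interval_decay; the other
   factors account for |x| < 64 and for the tail of rho. *)
definition decay_constant :: "real \<Rightarrow> real \<Rightarrow> real" where
  "decay_constant L B = (L + 1) * (2 * (36*L*B + 68*L^2*B^2) + 259)"

lemma decay_constant_pos:
  assumes "0 < L" "0 \<le> B"
  shows "0 < decay_constant L B"
proof -
  have "0 \<le> 2 * (36*L*B + 68*L^2*B^2)" using assms by simp
  then have "0 < 2 * (36*L*B + 68*L^2*B^2) + 259" by (rule add_nonneg_pos) simp
  then show ?thesis using assms by (simp add: decay_constant_def)
qed

lemma measure_convolution_sed_sum_decay:
  assumes \<nu>: "inv_sq_dominated L \<nu>1" "inv_sq_dominated L \<nu>2" and B: "(real (k + m))^2 * t^2 \<le> B"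
  shows "measure (sed_sum k t \<nu>1 \<star> sed_sum m t \<nu>2) {x-2..x+2} \<le> decay_constant L B / (1 + \<bar>x\<bar> powr (4/3))"
proof -
  let ?\<mu> = "\<lambda>j. if j < k then \<nu>1 else \<nu>2"
  let ?S = "distr (PiM {..<k+m} ?\<mu>) borel (\<lambda>\<omega>. t^2 * (\<Sum>j\<in>{..<k+m}. \<omega> j))"
  define D where "D = 36*L*B + 68*L^2*B^2"
  interpret inv_sq_product L ?\<mu> using \<nu> by unfold_locales auto
  have conv: "sed_sum k t \<nu>1 \<star> sed_sum m t \<nu>2 = ?S"
    using \<nu> by (intro convolution_sed_sum) (simp_all add: inv_sq_dominated_def)
  interpret S: prob_space ?S
    by (intro prob_space.prob_space_distr prob_space_product) measurable
  have "0 \<le> B" using B by (metis order_trans zero_le_mult_iff zero_le_power2)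
  then have "0 \<le> D" using L_pos by (simp add: D_def)
  moreover have "measure ?S {x-2..x+2} \<le> D / \<bar>x\<bar> powr (4/3)" if "64 \<le> \<bar>x\<bar>"
  proof (rule measure_scaled_sum_interval_decay[of "{..<k+m}" "t^2" B x 2, folded D_def])
    have "64 powr (2/3) \<le> \<bar>x\<bar> powr (2/3)" using that by (intro powr_mono2) auto
    then show "2 \<le> \<bar>x\<bar> powr (2/3)" using powr_64_thirds[of 2] by simp
  qed (use B that in auto)
  ultimately have "measure ?S {x-2..x+2} \<le> (2*D + 257) / (1 + \<bar>x\<bar> powr (4/3))"
    using decay_bound_of_far_bound[of "measure ?S {x-2..x+2}" 1 D x] by simp
  also have "\<dots> \<le> decay_constant L B / (1 + \<bar>x\<bar> powr (4/3))"
    using \<open>0 \<le> D\<close> L_pos by (intro divide_right_mono) (auto simp: decay_constant_def D_def[symmetric] distrib_right)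
  finally show ?thesis unfolding conv .
qed

lemma rhoE_decay:
  assumes \<nu>: "inv_sq_dominated L \<nu>" and B: "(real (K - 1))^2 * t^2 \<le> B"
    and rho: "prob_density rho" "\<And>x. rho x \<le> L / (1 + x^2)"
  shows "rhoE K t rho E \<nu> x \<le> decay_constant L B / (1 + \<bar>x + E\<bar> powr (4/3))"
proof -
  let ?S = "sed_sum (K - 1) t \<nu>"
  define D where "D = 36*L*B + 68*L^2*B^2"
  interpret inv_sq_product L "\<lambda>_. \<nu>" using \<nu> by unfold_locales
  have S: "?S = distr (PiM {..<K-1} (\<lambda>_. \<nu>)) borel (\<lambda>\<omega>. t^2 * (\<Sum>j\<in>{..<K-1}. \<omega> j))"
    by (simp add: sed_sum_def)
  have "0 \<le> B" using B by (metis order_trans zero_le_mult_iff zero_le_power2)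
  then have "0 \<le> D" using L_pos by (simp add: D_def)
  moreover have "prob_space ?S"
    unfolding S by (intro prob_space.prob_space_distr prob_space_product) measurable
  moreover have "measure ?S {z-h..z+h} \<le> D / \<bar>z\<bar> powr (4/3)"
    if "64 \<le> \<bar>z\<bar>" "0 \<le> h" "h \<le> \<bar>z\<bar> powr (2/3)" for z h
    unfolding S D_def using B that by (intro measure_scaled_sum_interval_decay) auto
  ultimately have "rhoE K t rho E \<nu> x \<le> L * (2*D + 259) / (1 + \<bar>x + E\<bar> powr (4/3))"
    unfolding rhoE_def using rho
    by (intro integral_shifted_density_decay) (auto simp: sed_sum_def prob_density_def)
  also have "\<dots> \<le> decay_constant L B / (1 + \<bar>x + E\<bar> powr (4/3))"
    using \<open>0 \<le> D\<close> L_pos by (intro divide_right_mono) (auto simp: decay_constant_def D_def[symmetric])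
  finally show ?thesis .
qed

theorem lemma6p2:
  fixes L G :: real and rho :: "real \<Rightarrow> real"
  assumes "regular L rho" and "G > 0"
  shows "\<exists>C>0. \<forall>(K::nat) (g::real) (p::real \<Rightarrow> real \<Rightarrow> real).
     (K \<ge> 2 \<and> 0 \<le> g \<and> g \<le> G \<and>
      (\<forall>E. prob_density (p E) \<and>
           sed_fixpoint K (g / (real K * ln (real K))) rho E (dens (p E))))
     \<longrightarrow>
     (\<forall>E1 E2 k x. k \<le> K - 1 \<longrightarrow>
        measure (sed_sum k (g / (real K * ln (real K))) (dens (p E1)) \<star>
                 sed_sum (K - k - 1) (g / (real K * ln (real K))) (dens (p E2))) {x - 2 .. x + 2}
          \<le> C / (1 + \<bar>x\<bar> powr (4/3))) \<and>
     (\<forall>E x. rhoE K (g / (real K * ln (real K))) rho E (dens (p E)) x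
          \<le> C / (1 + \<bar>x + E\<bar> powr (4/3)))"
proof -
  have L: "0 < L" and rho: "prob_density rho" and rho_le: "\<And>x. rho x \<le> L / (1 + x^2)"
    using assms(1) by (auto simp: regular_def)
  show ?thesis
  proof (intro exI[of _ "decay_constant L ((G / ln 2)^2)"] conjI allI impI)
    show "0 < decay_constant L ((G / ln 2)^2)"
      using L by (simp add: decay_constant_pos)
    fix K g and p :: "real \<Rightarrow> real \<Rightarrow> real"
    assume hyp: "K \<ge> 2 \<and> 0 \<le> g \<and> g \<le> G \<and>
      (\<forall>E. prob_density (p E) \<and> sed_fixpoint K (g / (real K * ln (real K))) rho E (dens (p E)))"
    let ?t = "g / (real K * ln (real K))"
    have dominated: "inv_sq_dominated L (dens (p E))" for E
      using hyp rho rho_le_of_cauchy_bound[OF rho_le less_imp_le[OF L]]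
      by (intro sed_fixpoint_inv_sq_dominated[of K ?t rho E] prob_density_dens) auto
    have B: "(real (K - 1))^2 * ?t^2 \<le> (G / ln 2)^2"
      using hyp by (intro scaled_coupling_sq_le) auto
    show "measure (sed_sum k ?t (dens (p E1)) \<star> sed_sum (K - k - 1) ?t (dens (p E2))) {x - 2 .. x + 2}
        \<le> decay_constant L ((G / ln 2)^2) / (1 + \<bar>x\<bar> powr (4/3))" if "k \<le> K - 1" for E1 E2 k x
    proof -
      have "k + (K - k - 1) = K - 1" using that by linarith
      then show ?thesis using B by (intro measure_convolution_sed_sum_decay dominated) simp
    qed
    show "rhoE K ?t rho E (dens (p E)) y \<le> decay_constant L ((G / ln 2)^2) / (1 + \<bar>y + E\<bar> powr (4/3))"
      for E y
      using rhoE_decay[OF dominated B rho rho_le] .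
  qed
qed

end
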